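(* Let $\mathbb{E},\mathbb{F}$ be Euclidean spaces, $A\colon\mathbb{E}\to\mathbb{F}$ linear, $b\in\operatorname{Range}A$, and $\mathcal{K}\subseteq\mathbb{E}$ a closed convex cone with nonempty interior. Define $$\operatorname{cond}:=\min_{y\in\mathbb{F}:\ \|y\|=1}\ \max\{\operatorname{dist}_{\mathcal{K}^*}(A^*y),\ \langle b,y\rangle\}.$$ Then $\operatorname{cond}\neq 0$ if and only if the Mangasarian-Fromovitz constraint qualification holds, i.e., $A$ is surjective and there exists $x$ in the interior of $\mathcal{K}$ with $Ax=b$.
   Context: $\mathcal{K}^*:=\{z\in\mathbb{E}:\langle x,z\rangle\ge 0\ \forall x\in\mathcal{K}\}$ is the dual cone, $A^*$ is the adjoint of $A$, and $\operatorname{dist}_{\mathcal{K}^*}(w)$ is the Euclidean distance from $w$ to $\mathcal{K}^*$. *)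

theory Defs
  imports "HOL-Analysis.Analysis"
begin

definition dual_cone :: "'a::real_inner set \<Rightarrow> 'a set" where
  "dual_cone K = {z. \<forall>x\<in>K. inner x z \<ge> 0}"

text \<open>Condition number: minimum over the unit sphere of
  max(dist_{K*}(A* y), <b,y>). The minimum is attained (continuous function on a
  compact nonempty sphere), so it is written as an infimum.\<close>
definition cond_num :: "('a::euclidean_space \<Rightarrow> 'b::euclidean_space) \<Rightarrow> 'b \<Rightarrow> 'a set \<Rightarrow> real" where
  "cond_num A b K = (INF y\<in>sphere 0 1. max (infdist (adjoint A y) (dual_cone K)) (inner b y))"

end

theory Submission
  imports Defs
begin

text \<open>Both sides are equivalent to the absence of a dual certificate: a vector \<open>y \<noteq> 0\<close> with
  \<open>A\<^sup>* y \<in> K\<^sup>*\<close> and \<open>\<langle>b, y\<rangle> \<le> 0\<close>. Since the objective is nonnegative and continuous on the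
  compact unit sphere, \<open>cond = 0\<close> means exactly that such a certificate exists. If \<open>A\<close> is
  not surjective, any nonzero \<open>y \<in> ker A\<^sup>*\<close> is one; if \<open>b \<notin> A (int K)\<close>, separating \<open>b\<close> from
  the convex set \<open>A (int K)\<close> yields one. Conversely, under MFCQ a certificate \<open>y\<close> gives
  \<open>z = A\<^sup>* y \<noteq> 0\<close> in \<open>K\<^sup>*\<close>, which is strictly positive on \<open>int K\<close>, contradicting
  \<open>\<langle>x, z\<rangle> = \<langle>b, y\<rangle> \<le> 0\<close> for \<open>A x = b\<close>.\<close>

lemma closed_dual_cone: "closed (dual_cone K)"
proof -
  have "dual_cone K = (\<Inter>x\<in>K. {z. 0 \<le> x \<bullet> z})" unfolding dual_cone_def by auto
  then show ?thesis by (simp add: closed_INT closed_halfspace_ge)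
qed

lemma zero_in_dual_cone: "0 \<in> dual_cone K"
  unfolding dual_cone_def by auto

lemma dual_cone_scaleR: "z \<in> dual_cone K \<Longrightarrow> 0 \<le> c \<Longrightarrow> c *\<^sub>R z \<in> dual_cone K"
  unfolding dual_cone_def by auto

lemma dual_cone_inner_pos_interior:
  fixes z :: "'a::real_inner"
  assumes "z \<in> dual_cone K" and "z \<noteq> 0" and "x \<in> interior K"
  shows "0 < x \<bullet> z"
proof -
  obtain e where e: "e > 0" "ball x e \<subseteq> K" using assms(3) mem_interior by blast
  define x' where "x' = x - (e / (2 * norm z)) *\<^sub>R z"
  have nz: "norm z > 0" using assms(2) by simp
  have "dist x x' = e / 2" using nz e(1) by (simp add: x'_def dist_norm)
  then have "x' \<in> K" using e by auto
  then have "0 \<le> x' \<bullet> z" using assms(1) unfolding dual_cone_def by auto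
  moreover have "x' \<bullet> z = x \<bullet> z - (e / (2 * norm z)) * (z \<bullet> z)"
    by (simp add: x'_def inner_diff_left)
  moreover have "0 < (e / (2 * norm z)) * (z \<bullet> z)" using e(1) nz by simp
  ultimately show ?thesis by linarith
qed

lemma dual_cone_if_bounded_below:
  assumes "conic K" and bound: "\<And>x. x \<in> K \<Longrightarrow> c \<le> x \<bullet> z"
  shows "z \<in> dual_cone K"
  unfolding dual_cone_def
proof (intro CollectI ballI)
  fix x assume xK: "x \<in> K"
  show "0 \<le> x \<bullet> z"
  proof (rule ccontr)
    assume neg: "\<not> 0 \<le> x \<bullet> z"
    define t where "t = (\<bar>c\<bar> + 1) / (- (x \<bullet> z))"
    have "t \<ge> 0" unfolding t_def using neg by (intro divide_nonneg_pos) auto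
    then have "t *\<^sub>R x \<in> K" using assms(1) xK by (simp add: conic_def)
    then have "c \<le> (t *\<^sub>R x) \<bullet> z" by (rule bound)
    moreover have "(t *\<^sub>R x) \<bullet> z = - \<bar>c\<bar> - 1" using neg by (simp add: t_def field_simps)
    ultimately show False by linarith
  qed
qed

lemma adjoint_kernel_nontrivial:
  fixes A :: "'a::euclidean_space \<Rightarrow> 'b::euclidean_space"
  assumes "linear A" and "\<not> surj A"
  obtains y where "y \<noteq> 0" and "adjoint A y = 0"
proof -
  have "span (range A) \<noteq> UNIV"
    using assms linear_span_image[OF assms(1), of UNIV] span_UNIV by metis
  then have "dim (range A) < DIM('b)"
    using dim_eq_full[of "range A"] dim_subset_UNIV[of "range A"] by linarith
  then obtain y where "y \<noteq> 0" and y_orth: "\<And>v. v \<in> span (range A) \<Longrightarrow> orthogonal y v"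
    using orthogonal_to_subspace_exists by blast
  have "A x \<bullet> y = 0" for x
    using y_orth span_base by (metis orthogonal_def inner_commute rangeI)
  then have "adjoint A y \<bullet> adjoint A y = 0"
    using adjoint_works[OF assms(1)] by simp
  with \<open>y \<noteq> 0\<close> show thesis using that by simp
qed

lemma adjoint_eq_0_if_surj:
  fixes A :: "'a::euclidean_space \<Rightarrow> 'b::euclidean_space"
  assumes "linear A" and "surj A" and "adjoint A y = 0"
  shows "y = 0"
proof -
  obtain w where "A w = y" using assms(2) by (metis surjD)
  then have "y \<bullet> y = w \<bullet> adjoint A y" using adjoint_works[OF assms(1)] by simp
  then show ?thesis using assms(3) by simp
qed

lemma dual_certificate_if_notin_image_interior:
  fixes A :: "'a::euclidean_space \<Rightarrow> 'b::euclidean_space"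
  assumes "linear A" and "convex_cone K" and "interior K \<noteq> {}"
    and "b \<notin> A ` interior K"
  obtains y where "y \<noteq> 0" and "adjoint A y \<in> dual_cone K" and "b \<bullet> y \<le> 0"
proof -
  have "convex K" "conic K" "K \<noteq> {}" using assms(2) by (auto simp: convex_cone_def)
  have "convex (A ` interior K)"
    using convex_linear_image[OF assms(1)] convex_interior[OF \<open>convex K\<close>] by blast
  moreover have "{b} \<inter> A ` interior K = {}" using assms(4) by auto
  ultimately obtain y c where "y \<noteq> 0" and yb: "y \<bullet> b \<le> c"
    and y_bound: "\<forall>v\<in>A ` interior K. c \<le> y \<bullet> v"
    using separating_hyperplane_sets[of "{b}" "A ` interior K"] assms(3) by auto
  have adj: "adjoint A y \<bullet> x = y \<bullet> A x" for x
    using adjoint_works[OF assms(1), of x y] by (simp add: inner_commute)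
  have "interior K \<subseteq> {x. c \<le> adjoint A y \<bullet> x}"
    using y_bound by (auto simp: adj)
  then have "closure (interior K) \<subseteq> {x. c \<le> adjoint A y \<bullet> x}"
    by (rule closure_minimal) (rule closed_halfspace_ge)
  moreover have "K \<subseteq> closure (interior K)"
    by (simp add: convex_closure_interior[OF \<open>convex K\<close> assms(3)] closure_subset)
  ultimately have K_bound: "\<And>x. x \<in> K \<Longrightarrow> c \<le> x \<bullet> adjoint A y"
    by (auto simp: inner_commute)
  have "c \<le> 0" using K_bound[of 0] \<open>conic K\<close> \<open>K \<noteq> {}\<close> by (simp add: conic_contains_0)
  show thesis
  proof (rule that[OF \<open>y \<noteq> 0\<close>])
    show "adjoint A y \<in> dual_cone K" using dual_cone_if_bounded_below[OF \<open>conic K\<close> K_bound] .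
    show "b \<bullet> y \<le> 0" using yb \<open>c \<le> 0\<close> by (simp add: inner_commute)
  qed
qed

lemma mfcq_iff_no_dual_certificate:
  fixes A :: "'a::euclidean_space \<Rightarrow> 'b::euclidean_space"
  assumes "linear A" and "b \<in> range A" and "convex_cone K" and "interior K \<noteq> {}"
  shows "(surj A \<and> (\<exists>x\<in>interior K. A x = b)) \<longleftrightarrow>
    \<not> (\<exists>y. y \<noteq> 0 \<and> adjoint A y \<in> dual_cone K \<and> b \<bullet> y \<le> 0)"
proof
  assume "surj A \<and> (\<exists>x\<in>interior K. A x = b)"
  then obtain x where "surj A" "x \<in> interior K" "A x = b" by blast
  show "\<not> (\<exists>y. y \<noteq> 0 \<and> adjoint A y \<in> dual_cone K \<and> b \<bullet> y \<le> 0)"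
  proof
    assume "\<exists>y. y \<noteq> 0 \<and> adjoint A y \<in> dual_cone K \<and> b \<bullet> y \<le> 0"
    then obtain y where "y \<noteq> 0" "adjoint A y \<in> dual_cone K" "b \<bullet> y \<le> 0" by blast
    have "adjoint A y \<noteq> 0" using adjoint_eq_0_if_surj[OF assms(1) \<open>surj A\<close>] \<open>y \<noteq> 0\<close> by auto
    then have "0 < x \<bullet> adjoint A y"
      using dual_cone_inner_pos_interior \<open>adjoint A y \<in> dual_cone K\<close> \<open>x \<in> interior K\<close> by blast
    also have "x \<bullet> adjoint A y = b \<bullet> y" using adjoint_works[OF assms(1)] \<open>A x = b\<close> by simp
    finally show False using \<open>b \<bullet> y \<le> 0\<close> by simp
  qed
next
  assume no_cert: "\<not> (\<exists>y. y \<noteq> 0 \<and> adjoint A y \<in> dual_cone K \<and> b \<bullet> y \<le> 0)"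
  have "surj A"
  proof (rule ccontr)
    assume "\<not> surj A"
    with assms(1) obtain y where "y \<noteq> 0" "adjoint A y = 0" by (rule adjoint_kernel_nontrivial)
    obtain x0 where "b = A x0" using assms(2) by auto
    then have "b \<bullet> y = x0 \<bullet> adjoint A y" using adjoint_works[OF assms(1)] by simp
    with \<open>adjoint A y = 0\<close> have "b \<bullet> y \<le> 0" by simp
    moreover have "adjoint A y \<in> dual_cone K" using \<open>adjoint A y = 0\<close> zero_in_dual_cone by simp
    ultimately show False using no_cert \<open>y \<noteq> 0\<close> by blast
  qed
  moreover have "b \<in> A ` interior K"
  proof (rule ccontr)
    assume "b \<notin> A ` interior K"
    with assms(1,3,4) obtain y where "y \<noteq> 0" "adjoint A y \<in> dual_cone K" "b \<bullet> y \<le> 0"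
      by (rule dual_certificate_if_notin_image_interior)
    with no_cert show False by blast
  qed
  ultimately show "surj A \<and> (\<exists>x\<in>interior K. A x = b)" by auto
qed

definition cond_objective :: "('a::euclidean_space \<Rightarrow> 'b::euclidean_space) \<Rightarrow> 'b \<Rightarrow> 'a set \<Rightarrow> 'b \<Rightarrow> real"
  where "cond_objective A b K y = max (infdist (adjoint A y) (dual_cone K)) (b \<bullet> y)"

lemma cond_num_eq_INF_cond_objective:
  "cond_num A b K = (INF y\<in>sphere 0 1. cond_objective A b K y)"
  by (simp add: cond_num_def cond_objective_def)

lemma cond_objective_nonneg: "0 \<le> cond_objective A b K y"
  by (simp add: cond_objective_def infdist_nonneg le_max_iff_disj)

lemma bdd_below_cond_objective: "bdd_below (cond_objective A b K ` S)"
  using cond_objective_nonneg by (intro bdd_belowI2)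

lemma cond_objective_eq_0_iff:
  "cond_objective A b K y = 0 \<longleftrightarrow> adjoint A y \<in> dual_cone K \<and> b \<bullet> y \<le> 0"
proof -
  have "infdist (adjoint A y) (dual_cone K) = 0 \<longleftrightarrow> adjoint A y \<in> dual_cone K"
    using in_closed_iff_infdist_zero[OF closed_dual_cone] zero_in_dual_cone by blast
  moreover have "0 \<le> infdist (adjoint A y) (dual_cone K)" by (rule infdist_nonneg)
  ultimately show ?thesis unfolding cond_objective_def by (auto simp: max_def)
qed

lemma continuous_on_cond_objective:
  assumes "linear A"
  shows "continuous_on S (cond_objective A b K)"
proof -
  have "bounded_linear (adjoint A)"
    using adjoint_linear[OF assms] by (simp add: linear_conv_bounded_linear)
  then show ?thesis unfolding cond_objective_def
    by (intro continuous_intros continuous_on_compose2[OF continuous_on_infdist[OF continuous_on_id]]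
        bounded_linear.continuous_on[of "adjoint A"]) auto
qed

lemma cond_num_attained:
  fixes A :: "'a::euclidean_space \<Rightarrow> 'b::euclidean_space"
  assumes "linear A"
  obtains y where "y \<in> sphere 0 1" and "cond_num A b K = cond_objective A b K y"
proof -
  have sphere_ne: "sphere (0::'b) 1 \<noteq> {}" by simp
  obtain y where y: "y \<in> sphere 0 1" and y_min: "\<And>y'. y' \<in> sphere 0 1 \<Longrightarrow>
      cond_objective A b K y \<le> cond_objective A b K y'"
    using continuous_attains_inf[OF compact_sphere sphere_ne continuous_on_cond_objective[OF assms]]
    by blast
  have "cond_num A b K \<le> cond_objective A b K y"
    unfolding cond_num_eq_INF_cond_objective by (rule cINF_lower[OF bdd_below_cond_objective y])
  moreover have "cond_objective A b K y \<le> cond_num A b K"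
    unfolding cond_num_eq_INF_cond_objective by (rule cINF_greatest[OF sphere_ne y_min])
  ultimately show thesis using that y by simp
qed

lemma cond_num_eq_0_iff:
  fixes A :: "'a::euclidean_space \<Rightarrow> 'b::euclidean_space"
  assumes "linear A"
  shows "cond_num A b K = 0 \<longleftrightarrow> (\<exists>y. y \<noteq> 0 \<and> adjoint A y \<in> dual_cone K \<and> b \<bullet> y \<le> 0)"
proof
  assume "cond_num A b K = 0"
  moreover obtain y where "y \<in> sphere 0 1" and "cond_num A b K = cond_objective A b K y"
    using assms by (rule cond_num_attained)
  ultimately have "cond_objective A b K y = 0" by simp
  then have "adjoint A y \<in> dual_cone K" and "b \<bullet> y \<le> 0"
    by (simp_all add: cond_objective_eq_0_iff)
  moreover have "y \<noteq> 0" using \<open>y \<in> sphere 0 1\<close> by auto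
  ultimately show "\<exists>y. y \<noteq> 0 \<and> adjoint A y \<in> dual_cone K \<and> b \<bullet> y \<le> 0" by blast
next
  assume "\<exists>y. y \<noteq> 0 \<and> adjoint A y \<in> dual_cone K \<and> b \<bullet> y \<le> 0"
  then obtain y where "y \<noteq> 0" "adjoint A y \<in> dual_cone K" "b \<bullet> y \<le> 0" by blast
  define u where "u = (1 / norm y) *\<^sub>R y"
  have u_sphere: "u \<in> sphere 0 1" using \<open>y \<noteq> 0\<close> by (simp add: u_def)
  have "adjoint A u = (1 / norm y) *\<^sub>R adjoint A y"
    using adjoint_linear[OF assms] unfolding u_def by (simp add: linear_cmul)
  then have "adjoint A u \<in> dual_cone K"
    using dual_cone_scaleR[OF \<open>adjoint A y \<in> dual_cone K\<close>, of "1 / norm y"] by simp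
  moreover have "b \<bullet> u \<le> 0"
    using \<open>b \<bullet> y \<le> 0\<close> by (simp add: u_def divide_nonpos_nonneg)
  ultimately have "cond_objective A b K u = 0" by (simp add: cond_objective_eq_0_iff)
  moreover have "cond_num A b K \<le> cond_objective A b K u"
    unfolding cond_num_eq_INF_cond_objective by (rule cINF_lower[OF bdd_below_cond_objective u_sphere])
  moreover have "0 \<le> cond_num A b K"
    unfolding cond_num_eq_INF_cond_objective using u_sphere cond_objective_nonneg
    by (intro cINF_greatest) auto
  ultimately show "cond_num A b K = 0" by simp
qed

theorem mainTheorem5:
  fixes A :: "'a::euclidean_space \<Rightarrow> 'b::euclidean_space"
    and b :: 'b and K :: "'a set"
  assumes "linear A"
    and "b \<in> range A"
    and "closed K" and "convex_cone K" and "interior K \<noteq> {}"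
  shows "cond_num A b K \<noteq> 0 \<longleftrightarrow> (surj A \<and> (\<exists>x\<in>interior K. A x = b))"
  using cond_num_eq_0_iff[OF assms(1)] mfcq_iff_no_dual_certificate[OF assms(1,2,4,5)]
  by simp

end
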